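(* For every mixed graph $G$ without directed cycles: $\Lambda(G)+1\le \mathrm{nd}_{\mathrm m}(G^+)$, $\Lambda(G)\le\mathrm{tw}(G^+)$, $\Lambda(G)\le 2^{\mathrm{td}(G)}-2$, and $\Lambda(G)\le 2\,\mathrm{vc}(G)$.
   Context: A mixed graph $G$ consists of a finite vertex set $V(G)$, a set $E(G)$ of undirected edges and a set $A(G)$ of directed arcs; it is simple and contains no directed cycle. The maxrank $\Lambda(G)$ is the number of arcs on a longest directed path. The transitive closure $G^+$ is obtained by adding every arc $(u,v)$ such that $G$ has a directed path from $u$ to $v$ and removing edges parallel to such arcs. $N^+(v)$, $N^-(v)$, $N^{\mathrm u}(v)$ are the out-, in- and undirected neighbors of $v$; $u,v$ have the same mixed type if $N^{\mathrm u}(u)\setminus\{v\}=N^{\mathrm u}(v)\setminus\{u\}$, $N^-(u)=N^-(v)$, $N^+(u)=N^+(v)$; the mixed neighborhood diversity $\mathrm{nd}_{\mathrm m}$ is the number of mixed types. $\mathrm{tw},\mathrm{td},\mathrm{vc}$ are treewidth, treedepth, vertex cover number of the underlying undirected graph (arcs replaced by edges); $\mathrm{tw}(G^+)$ refers to the underlying graph of $G^+$. *)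

theory Defs
  imports Main
begin

definition mixed_graph :: "'a set \<Rightarrow> 'a set set \<Rightarrow> ('a \<times> 'a) set \<Rightarrow> bool" where
  "mixed_graph V E A \<longleftrightarrow> finite V
     \<and> (\<forall>e\<in>E. \<exists>u v. e = {u, v} \<and> u \<noteq> v \<and> u \<in> V \<and> v \<in> V)
     \<and> (\<forall>(u, v)\<in>A. u \<noteq> v \<and> u \<in> V \<and> v \<in> V)
     \<comment> \<open>simple: no edge parallel to an arc, no pair of opposite arcs\<close>
     \<and> (\<forall>(u, v)\<in>A. {u, v} \<notin> E \<and> (v, u) \<notin> A)"

definition no_directed_cycle :: "('a \<times> 'a) set \<Rightarrow> bool" where
  "no_directed_cycle A \<longleftrightarrow> acyclic A"

definition dpath :: "'a set \<Rightarrow> ('a \<times> 'a) set \<Rightarrow> 'a list \<Rightarrow> bool" where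
  "dpath V A xs \<longleftrightarrow> xs \<noteq> [] \<and> distinct xs \<and> set xs \<subseteq> V
     \<and> (\<forall>i. Suc i < length xs \<longrightarrow> (xs ! i, xs ! Suc i) \<in> A)"

definition maxrank :: "'a set \<Rightarrow> ('a \<times> 'a) set \<Rightarrow> nat" where
  "maxrank V A = Max {length xs - 1 | xs. dpath V A xs}"

definition tc_arcs :: "('a \<times> 'a) set \<Rightarrow> ('a \<times> 'a) set" where
  "tc_arcs A = A\<^sup>+"

definition tc_edges :: "'a set set \<Rightarrow> ('a \<times> 'a) set \<Rightarrow> 'a set set" where
  "tc_edges E A = {e \<in> E. \<not> (\<exists>u v. e = {u, v} \<and> (u, v) \<in> A\<^sup>+)}"

definition out_nbrs :: "('a \<times> 'a) set \<Rightarrow> 'a \<Rightarrow> 'a set" where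
  "out_nbrs A v = {w. (v, w) \<in> A}"

definition in_nbrs :: "('a \<times> 'a) set \<Rightarrow> 'a \<Rightarrow> 'a set" where
  "in_nbrs A v = {w. (w, v) \<in> A}"

definition u_nbrs :: "'a set set \<Rightarrow> 'a \<Rightarrow> 'a set" where
  "u_nbrs E v = {w. {v, w} \<in> E}"

definition same_mixed_type :: "'a set set \<Rightarrow> ('a \<times> 'a) set \<Rightarrow> 'a \<Rightarrow> 'a \<Rightarrow> bool" where
  "same_mixed_type E A u v \<longleftrightarrow>
     u_nbrs E u - {v} = u_nbrs E v - {u}
     \<and> in_nbrs A u = in_nbrs A v \<and> out_nbrs A u = out_nbrs A v"

definition nd_m :: "'a set \<Rightarrow> 'a set set \<Rightarrow> ('a \<times> 'a) set \<Rightarrow> nat" where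
  "nd_m V E A = card {{v \<in> V. same_mixed_type E A u v} | u. u \<in> V}"

definition uedges :: "'a set set \<Rightarrow> ('a \<times> 'a) set \<Rightarrow> 'a set set" where
  "uedges E A = E \<union> {{u, v} | u v. (u, v) \<in> A}"

definition connected_in :: "'b set set \<Rightarrow> 'b set \<Rightarrow> bool" where
  "connected_in F S \<longleftrightarrow>
     (\<forall>x\<in>S. \<forall>y\<in>S. (x, y) \<in> {(a, b). {a, b} \<in> F \<and> a \<in> S \<and> b \<in> S}\<^sup>*)"

definition is_tree :: "'b set \<Rightarrow> 'b set set \<Rightarrow> bool" where
  "is_tree I F \<longleftrightarrow> finite I \<and> I \<noteq> {}
     \<and> (\<forall>e\<in>F. \<exists>u v. e = {u, v} \<and> u \<noteq> v \<and> u \<in> I \<and> v \<in> I)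
     \<and> connected_in F I \<and> card F = card I - 1"

definition tree_decomp ::
  "'a set \<Rightarrow> 'a set set \<Rightarrow> nat set \<Rightarrow> nat set set \<Rightarrow> (nat \<Rightarrow> 'a set) \<Rightarrow> bool" where
  "tree_decomp V F I T B \<longleftrightarrow> is_tree I T
     \<and> (\<forall>i\<in>I. B i \<subseteq> V)
     \<and> (\<forall>v\<in>V. \<exists>i\<in>I. v \<in> B i)
     \<and> (\<forall>e\<in>F. \<exists>i\<in>I. e \<subseteq> B i)
     \<and> (\<forall>v\<in>V. connected_in T {i \<in> I. v \<in> B i})"

definition treewidth :: "'a set \<Rightarrow> 'a set set \<Rightarrow> nat" where
  "treewidth V F = (LEAST k. \<exists>I T B. tree_decomp V F I T B \<and> (\<forall>i\<in>I. card (B i) \<le> k + 1))"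

text \<open>Treedepth: minimum height of a rooted forest on V (given by a parent function)
 whose closure contains all edges.  Height counts vertices on a root-to-leaf path.\<close>
definition forest_anc :: "'a set \<Rightarrow> ('a \<Rightarrow> 'a option) \<Rightarrow> ('a \<times> 'a) set" where
  "forest_anc V par = {(v, u). v \<in> V \<and> par v = Some u}\<^sup>+"

definition elim_forest :: "'a set \<Rightarrow> 'a set set \<Rightarrow> ('a \<Rightarrow> 'a option) \<Rightarrow> bool" where
  "elim_forest V F par \<longleftrightarrow>
     (\<forall>v\<in>V. \<forall>u. par v = Some u \<longrightarrow> u \<in> V)
     \<and> acyclic {(v, u). v \<in> V \<and> par v = Some u}
     \<and> (\<forall>e\<in>F. \<exists>u v. e = {u, v} \<and> (u, v) \<in> forest_anc V par)"

definition forest_depth :: "'a set \<Rightarrow> ('a \<Rightarrow> 'a option) \<Rightarrow> 'a \<Rightarrow> nat" where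
  "forest_depth V par v = card {u. (v, u) \<in> forest_anc V par} + 1"

definition treedepth :: "'a set \<Rightarrow> 'a set set \<Rightarrow> nat" where
  "treedepth V F = (LEAST h. \<exists>par. elim_forest V F par \<and> (\<forall>v\<in>V. forest_depth V par v \<le> h))"

definition vertex_cover_number :: "'a set \<Rightarrow> 'a set set \<Rightarrow> nat" where
  "vertex_cover_number V F = (LEAST k. \<exists>C. C \<subseteq> V \<and> card C = k \<and> (\<forall>e\<in>F. e \<inter> C \<noteq> {}))"

end

theory Submission
  imports Defs
begin

(* Let v_0 ... v_L be a longest directed path. In G^+ its vertices are pairwise joined by arcs,
   so by acyclicity they have pairwise distinct in-neighbourhoods, hence distinct mixed types;
   and they form a clique of the underlying graph, which by the Helly property of subtrees of a
   tree lies in a single bag of every tree decomposition. In an elimination forest of height h,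
   consecutive path vertices are ancestor-related; the whole path then lies below its shallowest
   vertex, and splitting it there shows that it has at most 2^h - 1 vertices. Finally, every arc
   of the path has an endpoint in a vertex cover, and a cover vertex meets at most two of them. *)

section \<open>Longest directed paths\<close>

lemma dpath_length_le_card:
  assumes "finite V" and "dpath V A xs"
  shows "length xs \<le> card V"
proof -
  have "length xs = card (set xs)" using assms(2) by (simp add: dpath_def distinct_card)
  also have "\<dots> \<le> card V" using assms by (intro card_mono) (auto simp: dpath_def)
  finally show ?thesis .
qed

lemma maxrank_attained:
  assumes "finite V" and "V \<noteq> {}"
  obtains xs where "dpath V A xs" and "maxrank V A = length xs - 1"
proof -
  let ?L = "{length xs - 1 | xs. dpath V A xs}"
  have "finite ?L"
    by (rule finite_subset[of _ "{..card V}"]) (auto dest: dpath_length_le_card[OF assms(1)])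
  moreover obtain v where "v \<in> V" using assms(2) by blast
  then have "dpath V A [v]" by (simp add: dpath_def)
  then have "?L \<noteq> {}" by blast
  ultimately have "Max ?L \<in> ?L" by (rule Max_in)
  then show ?thesis using that unfolding maxrank_def by blast
qed

lemma trancl_chain:
  assumes step: "\<And>k. Suc k < n \<Longrightarrow> (c k, c (Suc k)) \<in> R" and "i < j" and "j < n"
  shows "(c i, c j) \<in> R\<^sup>+"
  using assms(2,3)
proof (induction j)
  case 0
  then show ?case by simp
next
  case (Suc j)
  have "(c j, c (Suc j)) \<in> R" using step Suc.prems(2) .
  moreover have "i = j \<or> (c i, c j) \<in> R\<^sup>+" using Suc by linarith
  ultimately show ?case by auto
qed

lemma dpath_trancl_comparable:
  assumes "dpath V A xs" and "u \<in> set xs" and "v \<in> set xs" and "u \<noteq> v"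
  shows "(u, v) \<in> A\<^sup>+ \<or> (v, u) \<in> A\<^sup>+"
proof -
  obtain i j where ij: "i < length xs" "j < length xs" "u = xs ! i" "v = xs ! j"
    using assms(2,3) by (metis in_set_conv_nth)
  have step: "(xs ! k, xs ! Suc k) \<in> A" if "Suc k < length xs" for k
    using assms(1) that by (simp add: dpath_def)
  have "i < j \<or> j < i" using assms(4) ij by (metis linorder_neqE_nat)
  then show ?thesis using trancl_chain[of "length xs" "nth xs" A, OF step] ij by blast
qed

lemma mixed_graph_uedges_pairs:
  assumes "mixed_graph V E A"
  shows "\<forall>e\<in>uedges E A. \<exists>u v. e = {u, v} \<and> u \<noteq> v \<and> u \<in> V \<and> v \<in> V"
proof
  fix e assume "e \<in> uedges E A"
  then consider "e \<in> E" | u v where "e = {u, v}" "(u, v) \<in> A" unfolding uedges_def by blast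
  then show "\<exists>u v. e = {u, v} \<and> u \<noteq> v \<and> u \<in> V \<and> v \<in> V"
  proof cases
    case 1
    moreover have "\<forall>e\<in>E. \<exists>u v. e = {u, v} \<and> u \<noteq> v \<and> u \<in> V \<and> v \<in> V"
      using assms by (simp add: mixed_graph_def)
    ultimately show ?thesis by blast
  next
    case (2 u v)
    then have "u \<noteq> v \<and> u \<in> V \<and> v \<in> V" using assms unfolding mixed_graph_def by auto
    then show ?thesis using 2 by blast
  qed
qed

section \<open>Mixed neighbourhood diversity\<close>

lemma not_same_mixed_type_if_arc:
  assumes "(u, v) \<in> R" and "irrefl R"
  shows "\<not> same_mixed_type E R u v" and "\<not> same_mixed_type E R v u"
  using assms by (auto simp: same_mixed_type_def in_nbrs_def irrefl_def)

lemma card_le_nd_m_if_comparable: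
  assumes "finite V" and "K \<subseteq> V" and "irrefl R"
    and comparable: "\<forall>u\<in>K. \<forall>v\<in>K. u \<noteq> v \<longrightarrow> (u, v) \<in> R \<or> (v, u) \<in> R"
  shows "card K \<le> nd_m V E R"
proof -
  define type where "type u = {v \<in> V. same_mixed_type E R u v}" for u
  have "nd_m V E R = card (type ` V)"
    unfolding nd_m_def type_def by (simp add: Setcompr_eq_image)
  moreover have "card K \<le> card (type ` V)"
  proof (rule card_inj_on_le[where f = type])
    show "inj_on type K"
    proof (rule inj_onI)
      fix u v assume "u \<in> K" "v \<in> K" "type u = type v"
      then have "same_mixed_type E R u v"
        using assms(2) by (auto simp: type_def same_mixed_type_def)
      then show "u = v" using comparable not_same_mixed_type_if_arc[OF _ assms(3)] \<open>u \<in> K\<close> \<open>v \<in> K\<close>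
        by blast
    qed
  qed (use assms(1,2) in auto)
  ultimately show ?thesis by simp
qed

lemma dpath_length_le_nd_m:
  assumes "finite V" and "acyclic A" and xs: "dpath V A xs"
  shows "length xs \<le> nd_m V E (A\<^sup>+)"
proof -
  have "set xs \<subseteq> V" and "irrefl (A\<^sup>+)" using assms(2) xs by (simp_all add: dpath_def acyclic_irrefl)
  moreover have "\<forall>u\<in>set xs. \<forall>v\<in>set xs. u \<noteq> v \<longrightarrow> (u, v) \<in> A\<^sup>+ \<or> (v, u) \<in> A\<^sup>+"
    using dpath_trancl_comparable[OF xs] by blast
  ultimately have "card (set xs) \<le> nd_m V E (A\<^sup>+)" by (rule card_le_nd_m_if_comparable[OF assms(1)])
  then show ?thesis using xs by (simp add: dpath_def distinct_card)
qed

section \<open>Treewidth\<close>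

lemma connected_in_remove_leaf:
  assumes conn: "connected_in T S" and leaf: "\<And>z. {l, z} \<in> T \<Longrightarrow> z = p" and "p \<noteq> l"
  shows "connected_in (T - {{l, p}}) (S - {l})"
proof -
  define R where "R = {(a, b). {a, b} \<in> T \<and> a \<in> S \<and> b \<in> S}"
  define R' where "R' = {(a, b). {a, b} \<in> T - {{l, p}} \<and> a \<in> S - {l} \<and> b \<in> S - {l}}"
  \<comment> \<open>a walk entering the leaf must leave it again through p\<close>
  have "(y = l \<and> (x, p) \<in> R'\<^sup>*) \<or> (y \<noteq> l \<and> (x, y) \<in> R'\<^sup>*)"
    if "(x, y) \<in> R\<^sup>*" and "x \<in> S - {l}" for x y
    using that(1)
  proof (induction rule: rtrancl_induct)
    case base
    then show ?case using that(2) by auto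
  next
    case (step y z)
    then have yz: "{y, z} \<in> T" "y \<in> S" "z \<in> S" by (auto simp: R_def)
    show ?case
    proof (cases "y = l")
      case True
      then show ?thesis using leaf yz(1) step.IH \<open>p \<noteq> l\<close> by auto
    next
      case False
      then have xy: "(x, y) \<in> R'\<^sup>*" using step.IH by auto
      show ?thesis
      proof (cases "z = l")
        case True
        then have "y = p" using leaf yz(1) by (simp add: insert_commute)
        then show ?thesis using xy True by auto
      next
        case False
        then have "(y, z) \<in> R'" using yz \<open>y \<noteq> l\<close> by (auto simp: R'_def)
        then show ?thesis using xy False by auto
      qed
    qed
  qed
  then show ?thesis using conn unfolding connected_in_def R_def R'_def by blast
qed

lemma connected_in_leaf_neighbour:
  assumes "connected_in T S" and "\<And>z. {l, z} \<in> T \<Longrightarrow> z = p"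
    and "l \<in> S" and "y \<in> S" and "y \<noteq> l"
  shows "p \<in> S"
proof -
  have "(l, y) \<in> {(a, b). {a, b} \<in> T \<and> a \<in> S \<and> b \<in> S}\<^sup>*"
    using assms(1,3,4) unfolding connected_in_def by blast
  then obtain z where "(l, z) \<in> {(a, b). {a, b} \<in> T \<and> a \<in> S \<and> b \<in> S}"
    using assms(5) by (cases rule: converse_rtranclE) auto
  then show ?thesis using assms(2) by auto
qed

lemma is_tree_finite_edges:
  assumes "is_tree I T"
  shows "finite T"
proof (rule finite_subset)
  show "T \<subseteq> Pow I"
  proof
    fix e assume "e \<in> T"
    then obtain u v where "e = {u, v}" "u \<in> I" "v \<in> I" using assms unfolding is_tree_def by blast
    then show "e \<in> Pow I" by simp
  qed
  show "finite (Pow I)" using assms by (simp add: is_tree_def)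
qed

lemma is_tree_edge_distinct:
  assumes "is_tree I T" and "{a, b} \<in> T"
  shows "a \<noteq> b"
proof -
  obtain u v where "{a, b} = {u, v}" "u \<noteq> v" using assms unfolding is_tree_def by blast
  then show ?thesis by (auto simp: doubleton_eq_iff)
qed

lemma is_tree_degree_sum:
  assumes "is_tree I T"
  shows "(\<Sum>i\<in>I. card {e\<in>T. i \<in> e}) = 2 * card T"
proof -
  have "finite I" using assms by (simp add: is_tree_def)
  have "(\<Sum>i\<in>I. card {e\<in>T. i \<in> e}) = (\<Sum>i\<in>I. \<Sum>e\<in>T. if i \<in> e then 1 else 0)"
    using is_tree_finite_edges[OF assms] by (simp add: sum.If_cases Int_def)
  also have "\<dots> = (\<Sum>e\<in>T. \<Sum>i\<in>I. if i \<in> e then 1 else 0)" by (rule sum.swap)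
  also have "\<dots> = (\<Sum>e\<in>T. 2)"
  proof (rule sum.cong[OF refl])
    fix e assume "e \<in> T"
    then obtain u v where "e = {u, v}" "u \<noteq> v" "u \<in> I" "v \<in> I"
      using assms unfolding is_tree_def by blast
    then have "I \<inter> e = {u, v}" by auto
    then show "(\<Sum>i\<in>I. if i \<in> e then 1 else 0) = (2::nat)"
      using \<open>finite I\<close> \<open>u \<noteq> v\<close> by (simp add: sum.If_cases)
  qed
  finally show ?thesis by simp
qed

lemma is_tree_obtain_leaf:
  assumes tree: "is_tree I T" and "2 \<le> card I"
  obtains l p where "l \<in> I" "p \<in> I" "l \<noteq> p" "{l, p} \<in> T" "\<forall>z. {l, z} \<in> T \<longrightarrow> z = p"
proof -
  have "\<exists>l\<in>I. card {e\<in>T. l \<in> e} < 2"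
  proof (rule ccontr)
    assume "\<not> ?thesis"
    then have "(\<Sum>i\<in>I. 2) \<le> (\<Sum>i\<in>I. card {e\<in>T. i \<in> e})" by (intro sum_mono) auto
    then show False using is_tree_degree_sum[OF tree] assms(2) tree by (simp add: is_tree_def)
  qed
  then obtain l where l: "l \<in> I" and degree: "card {e\<in>T. l \<in> e} \<le> Suc 0" by auto
  have "finite I" using tree by (simp add: is_tree_def)
  then have "\<not> (\<forall>a\<in>I. \<forall>b\<in>I. a = b)" using assms(2) by (simp only: card_le_Suc0_iff_eq[symmetric])
  then obtain a b where "a \<in> I" "b \<in> I" "a \<noteq> b" by blast
  then obtain y where "y \<in> I" "y \<noteq> l" by blast
  moreover have "connected_in T I" using tree by (simp add: is_tree_def)
  ultimately have "(l, y) \<in> {(a, b). {a, b} \<in> T \<and> a \<in> I \<and> b \<in> I}\<^sup>*"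
    using l unfolding connected_in_def by blast
  then obtain p where "(l, p) \<in> {(a, b). {a, b} \<in> T \<and> a \<in> I \<and> b \<in> I}"
    using \<open>y \<noteq> l\<close> by (cases rule: converse_rtranclE) auto
  then have p: "{l, p} \<in> T" "p \<in> I" by auto
  have "l \<noteq> p" using is_tree_edge_distinct[OF tree p(1)] .
  have "finite {e\<in>T. l \<in> e}" using is_tree_finite_edges[OF tree] by simp
  then have incident: "\<forall>a\<in>{e\<in>T. l \<in> e}. \<forall>b\<in>{e\<in>T. l \<in> e}. a = b"
    using degree by (simp only: card_le_Suc0_iff_eq)
  have unique: "\<forall>z. {l, z} \<in> T \<longrightarrow> z = p"
  proof (intro allI impI)
    fix z assume "{l, z} \<in> T"
    then have "{l, z} = {l, p}" using incident p(1) by simp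
    then show "z = p" using \<open>l \<noteq> p\<close> by (simp add: doubleton_eq_iff)
  qed
  show ?thesis using that[OF l p(2) \<open>l \<noteq> p\<close> p(1) unique] .
qed

lemma is_tree_remove_leaf:
  assumes tree: "is_tree I T" and "l \<in> I" "p \<in> I" "l \<noteq> p" "{l, p} \<in> T"
    and leaf: "\<And>z. {l, z} \<in> T \<Longrightarrow> z = p"
  shows "is_tree (I - {l}) (T - {{l, p}})"
  unfolding is_tree_def
proof (intro conjI ballI)
  show "finite (I - {l})" "I - {l} \<noteq> {}" using tree assms(3,4) by (auto simp: is_tree_def)
  show "connected_in (T - {{l, p}}) (I - {l})"
    using connected_in_remove_leaf[OF _ leaf] tree assms(4) by (auto simp: is_tree_def)
  have "card (T - {{l, p}}) = card T - 1" using is_tree_finite_edges[OF tree] assms(5) by simp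
  then show "card (T - {{l, p}}) = card (I - {l}) - 1" using tree assms(2) by (simp add: is_tree_def)
next
  fix e assume e: "e \<in> T - {{l, p}}"
  then obtain u v where uv: "e = {u, v}" "u \<noteq> v" "u \<in> I" "v \<in> I"
    using tree unfolding is_tree_def by blast
  have "l \<notin> e" using e leaf by (auto simp: uv insert_commute)
  then show "\<exists>u v. e = {u, v} \<and> u \<noteq> v \<and> u \<in> I - {l} \<and> v \<in> I - {l}" using uv by blast
qed

lemma subtrees_remove_leaf:
  assumes leaf: "\<forall>z. {l, z} \<in> T \<longrightarrow> z = p" and "l \<noteq> p"
    and subtree: "\<forall>k\<in>K. S k \<subseteq> I \<and> S k \<noteq> {} \<and> connected_in T (S k)"
    and intersecting: "\<forall>k\<in>K. \<forall>k'\<in>K. S k \<inter> S k' \<noteq> {}"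
    and not_leaf: "\<forall>k\<in>K. S k \<noteq> {l}"
  shows "\<forall>k\<in>K. S k - {l} \<subseteq> I - {l} \<and> S k - {l} \<noteq> {} \<and> connected_in (T - {{l, p}}) (S k - {l})"
    and "\<forall>k\<in>K. \<forall>k'\<in>K. (S k - {l}) \<inter> (S k' - {l}) \<noteq> {}"
proof -
  have nonempty: "S k - {l} \<noteq> {}" if "k \<in> K" for k
    using not_leaf subtree that by blast
  then show "\<forall>k\<in>K. S k - {l} \<subseteq> I - {l} \<and> S k - {l} \<noteq> {} \<and> connected_in (T - {{l, p}}) (S k - {l})"
    using subtree connected_in_remove_leaf[OF _ leaf[rule_format] \<open>l \<noteq> p\<close>[symmetric]] by blast
  have p_mem: "p \<in> S k" if k: "k \<in> K" "l \<in> S k" for k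
  proof -
    obtain y where "y \<in> S k" "y \<noteq> l" using nonempty[OF k(1)] by blast
    then show ?thesis using connected_in_leaf_neighbour[OF _ leaf[rule_format]] subtree k by blast
  qed
  show "\<forall>k\<in>K. \<forall>k'\<in>K. (S k - {l}) \<inter> (S k' - {l}) \<noteq> {}"
  proof (intro ballI)
    fix k k' assume "k \<in> K" "k' \<in> K"
    then obtain x where "x \<in> S k" "x \<in> S k'" using intersecting by blast
    then show "(S k - {l}) \<inter> (S k' - {l}) \<noteq> {}"
      using p_mem \<open>k \<in> K\<close> \<open>k' \<in> K\<close> \<open>l \<noteq> p\<close> by (cases "x = l") auto
  qed
qed

text \<open>Induction on the tree, deleting a leaf l: if some subtree is {l}, then l is common to all;
  otherwise every subtree containing l also contains the neighbour of l.\<close>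
lemma subtrees_helly:
  assumes "is_tree I T"
    and subtree: "\<forall>k\<in>K. S k \<subseteq> I \<and> S k \<noteq> {} \<and> connected_in T (S k)"
    and intersecting: "\<forall>k\<in>K. \<forall>k'\<in>K. S k \<inter> S k' \<noteq> {}"
  shows "\<exists>i\<in>I. \<forall>k\<in>K. i \<in> S k"
  using assms
proof (induction "card I" arbitrary: I T S rule: less_induct)
  case less
  note tree = less.prems(1) and subtree = less.prems(2) and intersecting = less.prems(3)
  show ?case
  proof (cases "card I < 2")
    case True
    moreover have "card I \<noteq> 0" using tree by (simp add: is_tree_def)
    ultimately have "card I = 1" by linarith
    then obtain i where "I = {i}" by (rule card_1_singletonE)
    then show ?thesis using subtree by blast
  next
    case False
    then have "2 \<le> card I" by simp
    then obtain l p where lp: "l \<in> I" "p \<in> I" "l \<noteq> p" "{l, p} \<in> T"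
      and leaf: "\<forall>z. {l, z} \<in> T \<longrightarrow> z = p"
      by (rule is_tree_obtain_leaf[OF tree])
    show ?thesis
    proof (cases "\<exists>k\<in>K. S k = {l}")
      case True
      then obtain k0 where k0: "k0 \<in> K" "S k0 = {l}" by blast
      have "l \<in> S k" if "k \<in> K" for k
      proof -
        have "S k0 \<inter> S k \<noteq> {}" using intersecting k0(1) that by blast
        then show ?thesis using k0(2) by simp
      qed
      then show ?thesis using lp(1) by blast
    next
      case False
      then have "\<forall>k\<in>K. S k \<noteq> {l}" by blast
      note reduced = subtrees_remove_leaf[OF leaf lp(3) subtree intersecting this]
      have "card (I - {l}) < card I"
        using lp(1) tree by (simp add: is_tree_def card_gt_0_iff)
      then obtain i where "i \<in> I - {l}" "\<forall>k\<in>K. i \<in> S k - {l}"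
        using less.hyps[of "I - {l}" "T - {{l, p}}" "\<lambda>k. S k - {l}", OF _
            is_tree_remove_leaf[OF tree lp leaf[rule_format]] reduced]
        by blast
      then show ?thesis by blast
    qed
  qed
qed

lemma tree_decomp_clique_in_bag:
  assumes td: "tree_decomp V F I T B" and "K \<subseteq> V"
    and clique: "\<forall>u\<in>K. \<forall>v\<in>K. u \<noteq> v \<longrightarrow> {u, v} \<in> F"
  shows "\<exists>i\<in>I. K \<subseteq> B i"
proof -
  let ?S = "\<lambda>v. {i \<in> I. v \<in> B i}"
  have tree: "is_tree I T" and cover: "\<forall>v\<in>V. \<exists>i\<in>I. v \<in> B i"
    and edges: "\<forall>e\<in>F. \<exists>i\<in>I. e \<subseteq> B i" and conn: "\<forall>v\<in>V. connected_in T (?S v)"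
    using td unfolding tree_decomp_def by simp_all
  have subtree: "\<forall>v\<in>K. ?S v \<subseteq> I \<and> ?S v \<noteq> {} \<and> connected_in T (?S v)"
    using cover conn \<open>K \<subseteq> V\<close> by blast
  have "?S u \<inter> ?S v \<noteq> {}" if uv: "u \<in> K" "v \<in> K" for u v
  proof (cases "u = v")
    case True
    then show ?thesis using subtree uv by simp
  next
    case False
    then obtain i where "i \<in> I" "{u, v} \<subseteq> B i" using clique edges uv by meson
    then show ?thesis by blast
  qed
  then obtain i where "i \<in> I" "\<forall>v\<in>K. i \<in> ?S v" using subtrees_helly[OF tree subtree] by blast
  then show ?thesis by blast
qed

lemma card_clique_le_treewidth:
  assumes "finite V" and "\<forall>e\<in>F. e \<subseteq> V" and "K \<subseteq> V"
    and clique: "\<forall>u\<in>K. \<forall>v\<in>K. u \<noteq> v \<longrightarrow> {u, v} \<in> F"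
  shows "card K \<le> treewidth V F + 1"
proof -
  have "is_tree {0::nat} {}" by (simp add: is_tree_def connected_in_def)
  then have "tree_decomp V F {0} {} (\<lambda>_. V)"
    using assms(2) by (simp add: tree_decomp_def connected_in_def)
  then have "\<exists>k I T B. tree_decomp V F I T B \<and> (\<forall>i\<in>I. card (B i) \<le> k + 1)"
    by (intro exI[of _ "card V"] exI[of _ "{0}"] exI[of _ "{}"] exI[of _ "\<lambda>_. V"]) simp
  from LeastI_ex[OF this] obtain I T B where td: "tree_decomp V F I T B"
    and bags: "\<forall>i\<in>I. card (B i) \<le> treewidth V F + 1"
    unfolding treewidth_def by blast
  obtain i where "i \<in> I" "K \<subseteq> B i" using tree_decomp_clique_in_bag[OF td assms(3) clique] by blast
  have "B i \<subseteq> V" using td \<open>i \<in> I\<close> by (simp add: tree_decomp_def)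
  then have "finite (B i)" using assms(1) by (rule finite_subset)
  then have "card K \<le> card (B i)" using \<open>K \<subseteq> B i\<close> by (rule card_mono)
  also have "\<dots> \<le> treewidth V F + 1" using bags \<open>i \<in> I\<close> by blast
  finally show ?thesis .
qed

lemma dpath_length_le_treewidth:
  assumes mg: "mixed_graph V E A" and xs: "dpath V A xs"
  shows "length xs \<le> treewidth V (uedges (tc_edges E A) (A\<^sup>+)) + 1"
proof -
  let ?F = "uedges (tc_edges E A) (A\<^sup>+)"
  have "A \<subseteq> V \<times> V" using mg by (auto simp: mixed_graph_def)
  then have "A\<^sup>+ \<subseteq> V \<times> V" by (rule trancl_subset_Sigma)
  then have "\<forall>e\<in>?F. e \<subseteq> V" using mg by (fastforce simp: mixed_graph_def uedges_def tc_edges_def)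
  moreover have "set xs \<subseteq> V" using xs by (simp add: dpath_def)
  moreover have "\<forall>u\<in>set xs. \<forall>v\<in>set xs. u \<noteq> v \<longrightarrow> {u, v} \<in> ?F"
  proof (intro ballI impI)
    fix u v assume "u \<in> set xs" "v \<in> set xs" "u \<noteq> v"
    then have "(u, v) \<in> A\<^sup>+ \<or> (v, u) \<in> A\<^sup>+" by (rule dpath_trancl_comparable[OF xs])
    moreover have "{u, v} = {v, u}" by (rule insert_commute)
    ultimately show "{u, v} \<in> ?F" unfolding uedges_def by blast
  qed
  ultimately have "card (set xs) \<le> treewidth V ?F + 1"
    using card_clique_le_treewidth[of V ?F "set xs"] mg by (simp add: mixed_graph_def)
  then show ?thesis using xs by (simp add: dpath_def distinct_card)
qed

section \<open>Treedepth\<close>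

locale ancestor_order =
  fixes anc :: "('a \<times> 'a) set" and depth :: "'a \<Rightarrow> nat"
  assumes trans_anc: "trans anc"
    and anc_chain: "(x, y) \<in> anc \<Longrightarrow> (x, z) \<in> anc \<Longrightarrow> y = z \<or> (y, z) \<in> anc \<or> (z, y) \<in> anc"
    and depth_anc_less: "(x, y) \<in> anc \<Longrightarrow> depth y < depth x"
begin

abbreviation comparable :: "'a \<Rightarrow> 'a \<Rightarrow> bool" where
  "comparable x y \<equiv> (x, y) \<in> anc \<or> (y, x) \<in> anc"

lemma comparable_walk_below:
  assumes "successively comparable (x # zs)" and "x = m \<or> (x, m) \<in> anc"
    and "\<forall>z\<in>set zs. depth m \<le> depth z"
  shows "\<forall>z\<in>set zs. z = m \<or> (z, m) \<in> anc"
  using assms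
proof (induction zs arbitrary: x)
  case Nil
  then show ?case by simp
next
  case (Cons z zs)
  have "depth m \<le> depth z" using Cons.prems(3) by simp
  \<comment> \<open>z cannot be a proper ancestor of m, as it is not shallower than m\<close>
  have "z = m \<or> (z, m) \<in> anc"
  proof (cases "(z, x) \<in> anc")
    case True
    then show ?thesis using Cons.prems(2) trans_anc by (meson transD)
  next
    case False
    then have "(x, z) \<in> anc" using Cons.prems(1) by simp
    then show ?thesis
      using Cons.prems(2) anc_chain depth_anc_less \<open>depth m \<le> depth z\<close> by (metis leD)
  qed
  moreover have "\<forall>y\<in>set zs. y = m \<or> (y, m) \<in> anc"
    by (rule Cons.IH[of z]) (use Cons.prems calculation in simp_all)
  ultimately show ?case by simp
qed

text \<open>Split the walk at a shallowest vertex m: both halves lie strictly below m.\<close>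
lemma comparable_walk_length:
  assumes "distinct xs" and "successively comparable xs"
    and "\<forall>x\<in>set xs. d \<le> depth x \<and> depth x \<le> h"
  shows "length xs + 1 \<le> 2 ^ (h + 1 - d)"
  using assms
proof (induction "length xs" arbitrary: xs d rule: less_induct)
  case less
  show ?case
  proof (cases "xs = []")
    case True
    then show ?thesis by simp
  next
    case False
    obtain m where m: "m \<in> set xs" "depth m = Min (depth ` set xs)"
      using Min_in[of "depth ` set xs"] False by fastforce
    then have m_min: "\<forall>x\<in>set xs. depth m \<le> depth x" by simp
    obtain ys zs where xs: "xs = ys @ m # zs" using split_list[OF m(1)] by blast
    have walk_ys: "successively comparable (ys @ [m])" and "successively comparable (m # zs)"
      using less.prems(2) by (auto simp: xs successively_append_iff)
    moreover have "successively comparable (rev (ys @ [m]))"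
      unfolding successively_rev by (rule successively_mono[OF walk_ys]) auto
    ultimately have "\<forall>x\<in>set zs. x = m \<or> (x, m) \<in> anc" and "\<forall>x\<in>set ys. x = m \<or> (x, m) \<in> anc"
      using comparable_walk_below m_min by (auto simp: xs)
    moreover have "m \<notin> set ys" "m \<notin> set zs" using less.prems(1) by (auto simp: xs)
    ultimately have below: "\<forall>x\<in>set ys \<union> set zs. depth m + 1 \<le> depth x"
      using depth_anc_less by fastforce
    have "successively comparable ys" "successively comparable zs"
      using less.prems(2) by (auto simp: xs successively_append_iff successively_Cons)
    then have "length ys + 1 \<le> 2 ^ (h + 1 - (depth m + 1))"
      and "length zs + 1 \<le> 2 ^ (h + 1 - (depth m + 1))"
      using less.hyps[of ys "depth m + 1"] less.hyps[of zs "depth m + 1"] less.prems(1,3) below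
      by (auto simp: xs)
    moreover have "d \<le> depth m" "depth m \<le> h" using less.prems(3) m(1) by auto
    ultimately have "length xs + 1 \<le> 2 * 2 ^ (h - depth m)" by (simp add: xs)
    also have "\<dots> = 2 ^ (h + 1 - depth m)" using \<open>depth m \<le> h\<close> by (simp add: Suc_diff_le)
    also have "\<dots> \<le> 2 ^ (h + 1 - d)" using \<open>d \<le> depth m\<close> by (intro power_increasing) auto
    finally show ?thesis .
  qed
qed

end

lemma elim_forest_ancestor_order:
  assumes ef: "elim_forest V F par" and "finite V"
  shows "ancestor_order (forest_anc V par) (forest_depth V par)"
proof
  define P where "P = {(v, u). v \<in> V \<and> par v = Some u}"
  have anc: "forest_anc V par = P\<^sup>+" by (simp add: forest_anc_def P_def)
  show "trans (forest_anc V par)" by (simp add: anc)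
  show "y = z \<or> (y, z) \<in> forest_anc V par \<or> (z, y) \<in> forest_anc V par"
    if "(x, y) \<in> forest_anc V par" "(x, z) \<in> forest_anc V par" for x y z
  proof -
    have "single_valued P" by (auto simp: P_def single_valued_def)
    then have "(y, z) \<in> P\<^sup>* \<or> (z, y) \<in> P\<^sup>*"
      using that single_valued_confluent unfolding anc by (meson trancl_into_rtrancl)
    then show ?thesis unfolding anc by (auto simp: rtrancl_eq_or_trancl)
  qed
  show "forest_depth V par y < forest_depth V par x" if "(x, y) \<in> forest_anc V par" for x y
  proof -
    have "P \<subseteq> V \<times> V" using ef by (auto simp: P_def elim_forest_def)
    then have "P\<^sup>+ \<subseteq> V \<times> V" by (rule trancl_subset_Sigma)
    then have "finite {u. (x, u) \<in> P\<^sup>+}" using \<open>finite V\<close> by (auto intro: finite_subset)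
    moreover have "(y, y) \<notin> P\<^sup>+" using ef by (simp add: elim_forest_def P_def acyclic_def)
    then have "{u. (y, u) \<in> P\<^sup>+} \<subset> {u. (x, u) \<in> P\<^sup>+}"
      using that unfolding anc by (auto intro: trancl_trans)
    ultimately show ?thesis by (simp add: forest_depth_def anc psubset_card_mono)
  qed
qed

lemma elim_forest_walk_length:
  assumes ef: "elim_forest V F par" and "finite V"
    and height: "\<forall>v\<in>V. forest_depth V par v \<le> h"
    and "distinct xs" and "set xs \<subseteq> V" and walk: "successively (\<lambda>u v. {u, v} \<in> F) xs"
  shows "length xs + 1 \<le> 2 ^ h"
proof -
  interpret ancestor_order "forest_anc V par" "forest_depth V par"
    using elim_forest_ancestor_order[OF assms(1,2)] .
  have "successively comparable xs"
  proof (rule successively_mono[OF walk])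
    fix u v assume "{u, v} \<in> F"
    then obtain a b where "{u, v} = {a, b}" "(a, b) \<in> forest_anc V par"
      using ef by (auto simp: elim_forest_def)
    then show "comparable u v" by (auto simp: doubleton_eq_iff)
  qed
  moreover have "\<forall>x\<in>set xs. 1 \<le> forest_depth V par x \<and> forest_depth V par x \<le> h"
    using height \<open>set xs \<subseteq> V\<close> by (auto simp: forest_depth_def)
  ultimately show ?thesis using comparable_walk_length[OF \<open>distinct xs\<close>] by fastforce
qed

lemma elim_forest_exists:
  assumes "finite V" and edges: "\<forall>e\<in>F. \<exists>u v. e = {u, v} \<and> u \<noteq> v \<and> u \<in> V \<and> v \<in> V"
  shows "\<exists>par. elim_forest V F par"
proof -
  obtain g where g: "bij_betw g {0..<card V} V" using ex_bij_betw_nat_finite[OF assms(1)] by blast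
  define f where "f = the_inv_into {0..<card V} g"
  have f: "bij_betw f V {0..<card V}" using g by (simp add: f_def bij_betw_the_inv_into)
  have gf: "g (f v) = v" if "v \<in> V" for v using g that by (simp add: f_def f_the_inv_into_f_bij_betw)
  have fg: "f (g i) = i" if "i < card V" for i using g that by (simp add: f_def bij_betw_def the_inv_into_f_f)
  have f_less: "f v < card V" if "v \<in> V" for v using f that by (auto dest: bij_betwE)
  define par where "par v = (if v \<in> V \<and> f v \<noteq> 0 then Some (g (f v - 1)) else None)" for v
  define P where "P = {(v, u). v \<in> V \<and> par v = Some u}"
  have P_iff: "(v, u) \<in> P \<longleftrightarrow> v \<in> V \<and> f v \<noteq> 0 \<and> u = g (f v - 1)" for v u
    by (auto simp: P_def par_def)
  have chain: "(g i, g j) \<in> (P\<inverse>)\<^sup>+" if "i < j" "j < card V" for i j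
    by (rule trancl_chain[OF _ that]) (use fg bij_betwE[OF g] in \<open>simp add: P_iff\<close>)
  have anc: "(u, v) \<in> P\<^sup>+" if "u \<in> V" "v \<in> V" "f v < f u" for u v
  proof -
    have "(g (f v), g (f u)) \<in> (P\<inverse>)\<^sup>+" using chain f_less that by blast
    then show ?thesis using gf that(1,2) by (simp add: trancl_converse)
  qed
  have "elim_forest V F par"
    unfolding elim_forest_def
  proof (intro conjI ballI allI impI)
    show "u \<in> V" if "v \<in> V" "par v = Some u" for v u
      using that f_less[OF that(1)] bij_betwE[OF g] by (auto simp: par_def split: if_splits)
    have "f u < f v" if "(v, u) \<in> P" for u v
      using that f_less[of v] fg[of "f v - 1"] by (auto simp: P_iff)
    then show "acyclic {(v, u). v \<in> V \<and> par v = Some u}"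
      unfolding P_def[symmetric] by (rule acyclicI_order)
    fix e assume "e \<in> F"
    then obtain u v where uv: "e = {u, v}" "u \<noteq> v" "u \<in> V" "v \<in> V" using edges by blast
    then have "f u \<noteq> f v" using gf by metis
    then have "(u, v) \<in> P\<^sup>+ \<or> (v, u) \<in> P\<^sup>+" using anc uv by (meson linorder_neqE_nat)
    then show "\<exists>u v. e = {u, v} \<and> (u, v) \<in> forest_anc V par"
      using uv unfolding forest_anc_def P_def[symmetric] by (metis insert_commute)
  qed
  then show ?thesis by blast
qed

lemma treedepth_attained:
  assumes "finite V" and "\<forall>e\<in>F. \<exists>u v. e = {u, v} \<and> u \<noteq> v \<and> u \<in> V \<and> v \<in> V"
  obtains par where "elim_forest V F par" and "\<forall>v\<in>V. forest_depth V par v \<le> treedepth V F"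
proof -
  obtain par where "elim_forest V F par" using elim_forest_exists[OF assms] by blast
  moreover have "\<forall>v\<in>V. forest_depth V par v \<le> Max (forest_depth V par ` V)"
    using assms(1) by simp
  ultimately have "\<exists>h par. elim_forest V F par \<and> (\<forall>v\<in>V. forest_depth V par v \<le> h)" by blast
  from LeastI_ex[OF this] show ?thesis using that unfolding treedepth_def by blast
qed

lemma dpath_length_le_treedepth:
  assumes mg: "mixed_graph V E A" and xs: "dpath V A xs"
  shows "length xs + 1 \<le> 2 ^ treedepth V (uedges E A)"
proof -
  have fin: "finite V" using mg by (simp add: mixed_graph_def)
  obtain par where ef: "elim_forest V (uedges E A) par"
    and height: "\<forall>v\<in>V. forest_depth V par v \<le> treedepth V (uedges E A)"
    using treedepth_attained[OF fin mixed_graph_uedges_pairs[OF mg]] .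
  have "successively (\<lambda>u v. {u, v} \<in> uedges E A) xs"
    using xs by (auto simp: successively_conv_nth dpath_def uedges_def)
  then show ?thesis using elim_forest_walk_length[OF ef fin height] xs by (simp add: dpath_def)
qed

section \<open>Vertex cover number\<close>

lemma dpath_length_le_vertex_cover:
  assumes "dpath V A xs" and "finite C" and covered: "\<forall>(u, v)\<in>A. u \<in> C \<or> v \<in> C"
  shows "length xs \<le> 2 * card C + 1"
proof -
  define k where "k = length xs - 1"
  have dist: "distinct xs" using assms(1) by (simp add: dpath_def)
  let ?P = "{i. i < k \<and> xs ! i \<in> C}"
  let ?Q = "{i. i < k \<and> xs ! Suc i \<in> C}"
  have "{..<k} \<subseteq> ?P \<union> ?Q"
  proof
    fix i assume "i \<in> {..<k}"
    then have "(xs ! i, xs ! Suc i) \<in> A" using assms(1) by (auto simp: k_def dpath_def)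
    then show "i \<in> ?P \<union> ?Q" using covered \<open>i \<in> {..<k}\<close> by auto
  qed
  then have "card {..<k} \<le> card (?P \<union> ?Q)" by (intro card_mono) auto
  then have "k \<le> card (?P \<union> ?Q)" by simp
  also have "\<dots> \<le> card ?P + card ?Q" by (rule card_Un_le)
  also have "card ?P \<le> card C"
    by (rule card_inj_on_le[where f = "nth xs"])
      (use dist assms(2) in \<open>auto simp: inj_on_def k_def nth_eq_iff_index_eq\<close>)
  also have "card ?Q \<le> card C"
    by (rule card_inj_on_le[where f = "\<lambda>i. xs ! Suc i"])
      (use dist assms(2) in \<open>auto simp: inj_on_def k_def nth_eq_iff_index_eq\<close>)
  finally show ?thesis by (simp add: k_def)
qed

lemma vertex_cover_number_attained:
  assumes "\<forall>e\<in>F. e \<inter> V \<noteq> {}"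
  obtains C where "C \<subseteq> V" and "card C = vertex_cover_number V F" and "\<forall>e\<in>F. e \<inter> C \<noteq> {}"
proof -
  have "\<exists>k C. C \<subseteq> V \<and> card C = k \<and> (\<forall>e\<in>F. e \<inter> C \<noteq> {})" using assms by blast
  from LeastI_ex[OF this] show ?thesis using that unfolding vertex_cover_number_def by blast
qed

lemma dpath_length_le_vertex_cover_number:
  assumes mg: "mixed_graph V E A" and xs: "dpath V A xs"
  shows "length xs \<le> 2 * vertex_cover_number V (uedges E A) + 1"
proof -
  have "e \<inter> V \<noteq> {}" if "e \<in> uedges E A" for e
    using mixed_graph_uedges_pairs[OF mg] that by force
  then have "\<forall>e\<in>uedges E A. e \<inter> V \<noteq> {}" by blast
  then obtain C where "C \<subseteq> V" and card: "card C = vertex_cover_number V (uedges E A)"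
    and cover: "\<forall>e\<in>uedges E A. e \<inter> C \<noteq> {}"
    by (rule vertex_cover_number_attained)
  have "finite V" using mg by (simp add: mixed_graph_def)
  with \<open>C \<subseteq> V\<close> have "finite C" by (rule finite_subset)
  have "u \<in> C \<or> v \<in> C" if "(u, v) \<in> A" for u v
  proof -
    have "{u, v} \<in> uedges E A" using that by (auto simp: uedges_def)
    then have "{u, v} \<inter> C \<noteq> {}" using cover by blast
    then show ?thesis by blast
  qed
  then have "\<forall>(u, v)\<in>A. u \<in> C \<or> v \<in> C" by blast
  then show ?thesis using dpath_length_le_vertex_cover[OF xs \<open>finite C\<close>] card by simp
qed

theorem mainTheorem11:
  fixes V :: "'a set" and E :: "'a set set" and A :: "('a \<times> 'a) set"
  assumes "mixed_graph V E A" and "no_directed_cycle A" and "V \<noteq> {}"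
  shows "maxrank V A + 1 \<le> nd_m V (tc_edges E A) (tc_arcs A)
    \<and> maxrank V A \<le> treewidth V (uedges (tc_edges E A) (tc_arcs A))
    \<and> int (maxrank V A) \<le> 2 ^ treedepth V (uedges E A) - 2
    \<and> maxrank V A \<le> 2 * vertex_cover_number V (uedges E A)"
proof -
  have fin: "finite V" using assms(1) by (simp add: mixed_graph_def)
  have "acyclic A" using assms(2) by (simp add: no_directed_cycle_def)
  obtain xs where xs: "dpath V A xs" and rank: "maxrank V A = length xs - 1"
    using maxrank_attained[OF fin assms(3)] .
  have "1 \<le> length xs" using xs by (simp add: dpath_def Suc_leI)
  moreover have "int (length xs + 1) \<le> 2 ^ treedepth V (uedges E A)"
    using dpath_length_le_treedepth[OF assms(1) xs] by (metis of_nat_le_iff of_nat_numeral of_nat_power)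
  ultimately show ?thesis
    using dpath_length_le_nd_m[OF fin \<open>acyclic A\<close> xs, of "tc_edges E A"]
      dpath_length_le_treewidth[OF assms(1) xs]
      dpath_length_le_vertex_cover_number[OF assms(1) xs]
    unfolding rank tc_arcs_def by linarith
qed

end
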